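(* Let $X$ be a space having the metric sparsification property with constant $c\in(0,1]$ and function $f:\mathbb{N}\to\mathbb{N}$. Then for every $\omega\in\partial X$, the limit space $(X(\omega),d_\omega)$ has the metric sparsification property with the same constant $c$ and the same function $f$.
   Context: A *space* is a metric space $(X,d)$ that is strongly discrete (the set $\{d(x,y):x,y\in X\}$ is a discrete subset of $\mathbb{R}$) and has bounded geometry (for every $r>0$, $\sup_{x\in X}|B(x;r)|<\infty$). Metric sparsification property (MSP) with constant $c\in(0,1]$: there is a non-decreasing $f:\mathbb{N}\to\mathbb{N}$ such that for every $m\in\mathbb{N}$ and every finite positive measure $\mu$ on $X$ there is $\Omega=\bigsqcup_{i\in I}\Omega_i\subseteq X$ with $d(\Omega_i,\Omega_j)\ge m$ for $i\ne j$, $\operatorname{diam}(\Omega_i)\le f(m)$ for all $i$, and $\mu(\Omega)\ge c\mu(X)$. Ultrafilters: $\beta X$ is the Stone–Čech compactification (ultrafilters are finitely additive $\omega:\mathcal{P}(X)\to\{0,1\}$ with $\omega(X)=1$), $\partial X=\beta X\setminus X$. If $\omega(D)=1$ and $g:D\to K$, $K$ compact Hausdorff, $\lim_{x\to\omega}g(x)$ is the unique $k$ with $\omega(g^{-1}(U))=1$ for every neighbourhood $U$ of $k$. A partial translation is a bijection $t:D\to R$ between subsets of $X$ with $\sup_{x\in D}d(x,t(x))<\infty$; it is compatible with $\omega$ if $\omega(D)=1$, and then $t(\omega):=\lim_{x\to\omega}t(x)\in\beta X$. $X(\omega)$ is the set of all $t(\omega)$ with $t$ compatible with $\omega$; for a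 compatible family $\{t_\alpha\}_{\alpha\in X(\omega)}$ ($t_\alpha$ compatible with $\omega$, $t_\alpha(\omega)=\alpha$), $d_\omega(\alpha,\beta)=\lim_{x\to\omega}d(t_\alpha(x),t_\beta(x))$ is a metric on $X(\omega)$ independent of the family. *)

theory Defs
  imports "HOL-Analysis.Analysis"
begin

definition metric_on :: "'a set \<Rightarrow> ('a \<Rightarrow> 'a \<Rightarrow> real) \<Rightarrow> bool" where
  "metric_on X d \<longleftrightarrow>
     (\<forall>x\<in>X. \<forall>y\<in>X. 0 \<le> d x y \<and> (d x y = 0 \<longleftrightarrow> x = y) \<and> d x y = d y x) \<and>
     (\<forall>x\<in>X. \<forall>y\<in>X. \<forall>z\<in>X. d x z \<le> d x y + d y z)"

definition distance_set :: "'a set \<Rightarrow> ('a \<Rightarrow> 'a \<Rightarrow> real) \<Rightarrow> real set" where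
  "distance_set X d = {d x y | x y. x \<in> X \<and> y \<in> X}"

definition strongly_discrete :: "'a set \<Rightarrow> ('a \<Rightarrow> 'a \<Rightarrow> real) \<Rightarrow> bool" where
  "strongly_discrete X d \<longleftrightarrow> (\<forall>v\<in>distance_set X d. \<not> v islimpt distance_set X d)"

definition bounded_geometry :: "'a set \<Rightarrow> ('a \<Rightarrow> 'a \<Rightarrow> real) \<Rightarrow> bool" where
  "bounded_geometry X d \<longleftrightarrow>
     (\<forall>r>0. \<exists>N::nat. \<forall>x\<in>X. finite {y\<in>X. d x y \<le> r} \<and> card {y\<in>X. d x y \<le> r} \<le> N)"

definition is_space :: "'a set \<Rightarrow> ('a \<Rightarrow> 'a \<Rightarrow> real) \<Rightarrow> bool" where
  "is_space X d \<longleftrightarrow> metric_on X d \<and> strongly_discrete X d \<and> bounded_geometry X d"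

text \<open>The family P plays the role of the pieces Omega_i; Omega is their union.
  Finite positive measures on S are measures on the power set of S with finite total mass.\<close>
definition msp_with :: "'b set \<Rightarrow> ('b \<Rightarrow> 'b \<Rightarrow> real) \<Rightarrow> real \<Rightarrow> (nat \<Rightarrow> nat) \<Rightarrow> bool" where
  "msp_with S d c f \<longleftrightarrow> mono f \<and>
     (\<forall>(m::nat) (\<mu>::'b measure). space \<mu> = S \<longrightarrow> sets \<mu> = Pow S \<longrightarrow> emeasure \<mu> S < \<infinity> \<longrightarrow>
        (\<exists>P. P \<subseteq> Pow S \<and> disjoint P \<and>
             (\<forall>A\<in>P. \<forall>B\<in>P. A \<noteq> B \<longrightarrow> (\<forall>x\<in>A. \<forall>y\<in>B. real m \<le> d x y)) \<and>
             (\<forall>A\<in>P. \<forall>x\<in>A. \<forall>y\<in>A. d x y \<le> real (f m)) \<and>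
             ennreal c * emeasure \<mu> S \<le> emeasure \<mu> (\<Union>P)))"

text \<open>An ultrafilter on X: a finitely additive {0,1}-valued function on the subsets of X
  with value 1 on X, represented by the collection of sets of value 1.\<close>
definition ultrafilter_on :: "'a set \<Rightarrow> 'a set set \<Rightarrow> bool" where
  "ultrafilter_on X U \<longleftrightarrow> U \<subseteq> Pow X \<and> X \<in> U \<and>
     (\<forall>A B. A \<subseteq> X \<longrightarrow> B \<subseteq> X \<longrightarrow> A \<inter> B = {} \<longrightarrow>
        ((A \<union> B \<in> U \<longleftrightarrow> A \<in> U \<or> B \<in> U) \<and> \<not> (A \<in> U \<and> B \<in> U)))"

definition betaX :: "'a set \<Rightarrow> 'a set set set" where
  "betaX X = {U. ultrafilter_on X U}"

definition principal_uf :: "'a set \<Rightarrow> 'a \<Rightarrow> 'a set set" where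
  "principal_uf X x = {A. A \<subseteq> X \<and> x \<in> A}"

definition boundaryX :: "'a set \<Rightarrow> 'a set set set" where
  "boundaryX X = betaX X - principal_uf X ` X"

definition partial_translation :: "'a set \<Rightarrow> ('a \<Rightarrow> 'a \<Rightarrow> real) \<Rightarrow> 'a set \<Rightarrow> ('a \<Rightarrow> 'a) \<Rightarrow> bool" where
  "partial_translation X d D t \<longleftrightarrow>
     D \<subseteq> X \<and> inj_on t D \<and> t ` D \<subseteq> X \<and> (\<exists>K. \<forall>x\<in>D. d x (t x) \<le> K)"

text \<open>The limit along omega of x |-> t x (viewed in betaX) in the Stone topology of betaX,
  whose basic open sets are {eta. A in eta} for A a subset of X.\<close>
definition translate_uf :: "'a set \<Rightarrow> 'a set set \<Rightarrow> 'a set \<Rightarrow> ('a \<Rightarrow> 'a) \<Rightarrow> 'a set set" where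
  "translate_uf X \<omega> D t =
     (THE \<eta>. \<eta> \<in> betaX X \<and> (\<forall>A. A \<subseteq> X \<longrightarrow> A \<in> \<eta> \<longrightarrow> {x\<in>D. t x \<in> A} \<in> \<omega>))"

definition X_omega :: "'a set \<Rightarrow> ('a \<Rightarrow> 'a \<Rightarrow> real) \<Rightarrow> 'a set set \<Rightarrow> 'a set set set" where
  "X_omega X d \<omega> = {translate_uf X \<omega> D t | D t. partial_translation X d D t \<and> D \<in> \<omega>}"

definition ultralim_real :: "'a set set \<Rightarrow> 'a set \<Rightarrow> ('a \<Rightarrow> real) \<Rightarrow> real" where
  "ultralim_real \<omega> D g = (THE r. \<forall>U. open U \<longrightarrow> r \<in> U \<longrightarrow> {x\<in>D. g x \<in> U} \<in> \<omega>)"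

definition d_omega :: "'a set \<Rightarrow> ('a \<Rightarrow> 'a \<Rightarrow> real) \<Rightarrow> 'a set set \<Rightarrow> 'a set set \<Rightarrow> 'a set set \<Rightarrow> real" where
  "d_omega X d \<omega> \<alpha> \<beta> = (THE r. \<exists>Da ta Db tb.
      partial_translation X d Da ta \<and> Da \<in> \<omega> \<and> translate_uf X \<omega> Da ta = \<alpha> \<and>
      partial_translation X d Db tb \<and> Db \<in> \<omega> \<and> translate_uf X \<omega> Db tb = \<beta> \<and>
      ultralim_real \<omega> (Da \<inter> Db) (\<lambda>x. d (ta x) (tb x)) = r)"

end

theory Submission
  imports Defs
begin

(* Fix, for every point alpha of X(omega), a compatible partial translation (rdom alpha, rmap alpha)
   representing it; d_omega(alpha, beta) is then the omega-limit of d(rmap alpha x, rmap beta x).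
   Given m and a finite measure mu on X(omega), push mu forward to X along alpha |-> rmap alpha x
   for every x in X and sparsify the result in X, obtaining an (m, f m)-sparse family PP x.
   Call alpha and beta related when their representatives lie in a common piece of PP x for
   omega-almost every x.  The classes of this partial equivalence relation form an
   (m, f m)-sparse family in X(omega), since separation and diameter bounds pass to
   omega-limits.  Their union keeps the proportion c of mu: for a finite set G of points a
   single x in X decides membership for all of G, and X(omega) is countable by bounded
   geometry, hence exhausted by finite sets. *)

section \<open>Ultrafilters on a set\<close>

lemma uf_subset: "ultrafilter_on X U \<Longrightarrow> A \<in> U \<Longrightarrow> A \<subseteq> X"
  unfolding ultrafilter_on_def by blast

lemma uf_top: "ultrafilter_on X U \<Longrightarrow> X \<in> U"
  unfolding ultrafilter_on_def by blast

lemma uf_disjoint_union: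
  assumes "ultrafilter_on X U" "A \<subseteq> X" "B \<subseteq> X" "A \<inter> B = {}"
  shows "A \<union> B \<in> U \<longleftrightarrow> A \<in> U \<or> B \<in> U" "\<not> (A \<in> U \<and> B \<in> U)"
  using assms unfolding ultrafilter_on_def by blast+

lemma uf_empty: "ultrafilter_on X U \<Longrightarrow> {} \<notin> U"
  using uf_disjoint_union(2)[of X U "{}" X] uf_top[of X U] by auto

lemma uf_nonempty: "ultrafilter_on X U \<Longrightarrow> A \<in> U \<Longrightarrow> \<exists>x. x \<in> A"
  using uf_empty by (metis ex_in_conv)

lemma uf_mono:
  assumes U: "ultrafilter_on X U" and "A \<in> U" "A \<subseteq> B" "B \<subseteq> X"
  shows "B \<in> U"
proof -
  have "A \<subseteq> X" using uf_subset U \<open>A \<in> U\<close> by blast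
  then have "A \<union> (B - A) \<in> U" using uf_disjoint_union(1)[OF U, of A "B - A"] assms by blast
  then show ?thesis using \<open>A \<subseteq> B\<close> by (simp add: Un_absorb1)
qed

lemma uf_compl:
  assumes U: "ultrafilter_on X U" and "A \<subseteq> X"
  shows "A \<in> U \<longleftrightarrow> X - A \<notin> U"
proof -
  have "A \<union> (X - A) \<in> U" using uf_top[OF U] assms(2) by (simp add: Un_absorb1)
  then show ?thesis using uf_disjoint_union[OF U, of A "X - A"] assms(2) by blast
qed

lemma uf_Int:
  assumes U: "ultrafilter_on X U" and A: "A \<in> U" and B: "B \<in> U"
  shows "A \<inter> B \<in> U"
proof (rule ccontr)
  assume "A \<inter> B \<notin> U"
  have sub: "A \<subseteq> X" "B \<subseteq> X" using uf_subset U A B by blast+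
  have "(A \<inter> B) \<union> (A - B) \<in> U" using A by (simp add: Int_Diff_Un)
  then have "A - B \<in> U" using \<open>A \<inter> B \<notin> U\<close> uf_disjoint_union(1)[OF U, of "A \<inter> B" "A - B"] sub by blast
  then show False using uf_disjoint_union(2)[OF U, of "A - B" B] sub B by blast
qed

lemma uf_Int_finite:
  assumes U: "ultrafilter_on X U" and "finite I" and "\<And>i. i \<in> I \<Longrightarrow> A i \<in> U"
  shows "X \<inter> (\<Inter>i\<in>I. A i) \<in> U"
  using assms(2,3)
proof (induction I rule: finite_induct)
  case empty
  then show ?case using uf_top[OF U] by simp
next
  case (insert a F)
  have "X \<inter> (\<Inter>i\<in>insert a F. A i) = A a \<inter> (X \<inter> (\<Inter>i\<in>F. A i))" by blast
  then show ?case using uf_Int[OF U, of "A a"] insert by simp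
qed

lemma uf_common_point:
  assumes U: "ultrafilter_on X U" and "finite I" and "\<And>i. i \<in> I \<Longrightarrow> A i \<in> U"
  obtains x where "x \<in> X" "\<And>i. i \<in> I \<Longrightarrow> x \<in> A i"
proof -
  have "X \<inter> (\<Inter>i\<in>I. A i) \<in> U" using U assms(2,3) by (rule uf_Int_finite)
  then obtain x where "x \<in> X \<inter> (\<Inter>i\<in>I. A i)" using uf_nonempty[OF U] by blast
  then show ?thesis using that by blast
qed

lemma uf_Un_finite:
  assumes U: "ultrafilter_on X U" and "finite I" and "(\<Union>i\<in>I. A i) \<in> U"
    and "\<And>i. i \<in> I \<Longrightarrow> A i \<subseteq> X"
  shows "\<exists>i\<in>I. A i \<in> U"
proof (rule ccontr)
  assume "\<not> ?thesis"
  then have "X - A i \<in> U" if "i \<in> I" for i using uf_compl[OF U] assms(4) that by blast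
  then have "X \<inter> (\<Inter>i\<in>I. X - A i) \<in> U" by (rule uf_Int_finite[OF U assms(2)])
  then have "X \<inter> (\<Inter>i\<in>I. X - A i) \<inter> (\<Union>i\<in>I. A i) \<in> U" using uf_Int[OF U] assms(3) by blast
  moreover have "X \<inter> (\<Inter>i\<in>I. X - A i) \<inter> (\<Union>i\<in>I. A i) = {}" by blast
  ultimately show False using uf_empty[OF U] by simp
qed

lemma uf_Collect_mono:
  assumes U: "ultrafilter_on X U" and "{x\<in>X. P x} \<in> U" and "\<And>x. x \<in> X \<Longrightarrow> P x \<Longrightarrow> Q x"
  shows "{x\<in>X. Q x} \<in> U"
  by (rule uf_mono[OF U assms(2)]) (use assms(3) in auto)

lemma uf_Collect_conj:
  assumes U: "ultrafilter_on X U" and "{x\<in>X. P x} \<in> U" and "{x\<in>X. Q x} \<in> U"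
  shows "{x\<in>X. P x \<and> Q x} \<in> U"
proof -
  have "{x\<in>X. P x} \<inter> {x\<in>X. Q x} \<in> U" using uf_Int[OF U assms(2,3)] .
  moreover have "{x\<in>X. P x} \<inter> {x\<in>X. Q x} = {x\<in>X. P x \<and> Q x}" by blast
  ultimately show ?thesis by simp
qed


definition sparse_family :: "'b set \<Rightarrow> ('b \<Rightarrow> 'b \<Rightarrow> real) \<Rightarrow> nat \<Rightarrow> nat \<Rightarrow> 'b set set \<Rightarrow> bool" where
  "sparse_family S d m R P \<longleftrightarrow> P \<subseteq> Pow S \<and> disjoint P \<and>
     (\<forall>A\<in>P. \<forall>B\<in>P. A \<noteq> B \<longrightarrow> (\<forall>x\<in>A. \<forall>y\<in>B. real m \<le> d x y)) \<and>
     (\<forall>A\<in>P. \<forall>x\<in>A. \<forall>y\<in>A. d x y \<le> real R)"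

lemma msp_with_iff:
  "msp_with S d c f \<longleftrightarrow> mono f \<and>
     (\<forall>m (\<mu>::'b measure). space \<mu> = S \<longrightarrow> sets \<mu> = Pow S \<longrightarrow> emeasure \<mu> S < \<infinity> \<longrightarrow>
        (\<exists>P. sparse_family S d m (f m) P \<and> ennreal c * emeasure \<mu> S \<le> emeasure \<mu> (\<Union>P)))"
  unfolding msp_with_def sparse_family_def by (simp only: conj_assoc)

lemma sparse_familyD:
  assumes "sparse_family S d m R P"
  shows "P \<subseteq> Pow S" "disjoint P"
    "\<And>A B x y. A \<in> P \<Longrightarrow> B \<in> P \<Longrightarrow> A \<noteq> B \<Longrightarrow> x \<in> A \<Longrightarrow> y \<in> B \<Longrightarrow> real m \<le> d x y"
    "\<And>A x y. A \<in> P \<Longrightarrow> x \<in> A \<Longrightarrow> y \<in> A \<Longrightarrow> d x y \<le> real R"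
proof -
  note family = assms[unfolded sparse_family_def]
  show "P \<subseteq> Pow S" "disjoint P" using family by simp_all
  show "real m \<le> d x y" if "A \<in> P" "B \<in> P" "A \<noteq> B" "x \<in> A" "y \<in> B" for A B x y
    using family that by simp
  show "d x y \<le> real R" if "A \<in> P" "x \<in> A" "y \<in> A" for A x y
    using family that by simp
qed

lemma msp_withD:
  assumes "msp_with S d c f" "space \<mu> = S" "sets \<mu> = Pow S" "emeasure \<mu> S < \<infinity>"
  shows "\<exists>P. sparse_family S d m (f m) P \<and> ennreal c * emeasure \<mu> S \<le> emeasure \<mu> (\<Union>P)"
  using assms unfolding msp_with_iff by blast


section \<open>Greedy colouring of graphs of bounded degree\<close>

function greedy_colour :: "(nat \<Rightarrow> nat \<Rightarrow> bool) \<Rightarrow> nat \<Rightarrow> nat" where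
  "greedy_colour R n = (LEAST c. c \<notin> greedy_colour R ` {m. m < n \<and> R m n})"
  by pat_completeness auto
termination by (relation "Wellfounded.measure (\<lambda>(R, n). n)") auto

declare greedy_colour.simps[simp del]

lemma greedy_colour_differs:
  assumes "m < n" "R m n"
  shows "greedy_colour R n \<noteq> greedy_colour R m"
proof -
  let ?used = "greedy_colour R ` {m. m < n \<and> R m n}"
  have "\<exists>c. c \<notin> ?used" using ex_new_if_finite[OF infinite_UNIV_nat] by simp
  then have "greedy_colour R n \<notin> ?used"
    using LeastI_ex[of "\<lambda>c. c \<notin> ?used"] greedy_colour.simps[of R n] by simp
  then show ?thesis using assms by auto
qed

lemma greedy_colour_bounded:
  assumes "card {m. m < n \<and> R m n} \<le> N"
  shows "greedy_colour R n \<le> N"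
proof -
  let ?used = "greedy_colour R ` {m. m < n \<and> R m n}"
  have "card ?used \<le> card {m. m < n \<and> R m n}" by (rule card_image_le) simp
  then have "card ?used \<le> N" using assms by simp
  then have "\<not> {..N} \<subseteq> ?used" using card_mono[of ?used "{..N}"] by auto
  then obtain c where "c \<le> N" "c \<notin> ?used" by blast
  then show ?thesis using Least_le[of "\<lambda>c. c \<notin> ?used" c] greedy_colour.simps[of R n] by simp
qed

lemma bounded_degree_colouring:
  fixes adj :: "'b \<Rightarrow> 'b \<Rightarrow> bool"
  assumes cY: "countable Y" and sym: "\<And>y z. adj y z \<Longrightarrow> adj z y"
    and deg: "\<And>y. y \<in> Y \<Longrightarrow> finite {z\<in>Y. adj y z} \<and> card {z\<in>Y. adj y z} \<le> N"
  shows "\<exists>col. (\<forall>y\<in>Y. col y \<le> N) \<and> (\<forall>y\<in>Y. \<forall>z\<in>Y. adj y z \<longrightarrow> y \<noteq> z \<longrightarrow> col y \<noteq> col z)"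
proof -
  define i where "i = to_nat_on Y"
  have inj: "inj_on i Y" unfolding i_def using inj_on_to_nat_on[OF cY] .
  define R where "R m n \<longleftrightarrow> (\<exists>y\<in>Y. \<exists>z\<in>Y. i y = m \<and> i z = n \<and> adj y z)" for m n
  define col where "col y = greedy_colour R (i y)" for y
  have "col z \<le> N" if z: "z \<in> Y" for z
  proof -
    have "{m. m < i z \<and> R m (i z)} \<subseteq> i ` {y\<in>Y. adj z y}"
    proof
      fix m assume "m \<in> {m. m < i z \<and> R m (i z)}"
      then obtain y z' where "y \<in> Y" "z' \<in> Y" "i y = m" "i z' = i z" "adj y z'"
        unfolding R_def by auto
      then show "m \<in> i ` {y\<in>Y. adj z y}" using inj z sym unfolding inj_on_def by auto
    qed
    then have "card {m. m < i z \<and> R m (i z)} \<le> card (i ` {y\<in>Y. adj z y})"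
      using deg[OF z] by (intro card_mono) auto
    also have "\<dots> \<le> card {y\<in>Y. adj z y}" using deg[OF z] by (intro card_image_le) simp
    also have "\<dots> \<le> N" using deg[OF z] by simp
    finally show ?thesis unfolding col_def by (rule greedy_colour_bounded)
  qed
  moreover have "col y \<noteq> col z" if yz: "y \<in> Y" "z \<in> Y" "adj y z" "y \<noteq> z" for y z
  proof -
    have "i y \<noteq> i z" using inj yz unfolding inj_on_def by auto
    moreover have "R (i y) (i z)" "R (i z) (i y)" unfolding R_def using yz sym by blast+
    ultimately show ?thesis
      using greedy_colour_differs[of "i y" "i z" R] greedy_colour_differs[of "i z" "i y" R]
      unfolding col_def by (cases "i y < i z") auto
  qed
  ultimately show ?thesis by blast
qed


lemma metric_sym: "metric_on X d \<Longrightarrow> x \<in> X \<Longrightarrow> y \<in> X \<Longrightarrow> d x y = d y x"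
  unfolding metric_on_def by blast

lemma metric_triangle:
  "metric_on X d \<Longrightarrow> x \<in> X \<Longrightarrow> y \<in> X \<Longrightarrow> z \<in> X \<Longrightarrow> d x z \<le> d x y + d y z"
  unfolding metric_on_def by blast

lemma metric_nonneg: "metric_on X d \<Longrightarrow> x \<in> X \<Longrightarrow> y \<in> X \<Longrightarrow> 0 \<le> d x y"
  unfolding metric_on_def by blast

lemma bounded_geometryD:
  "bounded_geometry X d \<Longrightarrow> r > 0 \<Longrightarrow>
     \<exists>N::nat. \<forall>x\<in>X. finite {y\<in>X. d x y \<le> r} \<and> card {y\<in>X. d x y \<le> r} \<le> N"
  unfolding bounded_geometry_def by blast

text \<open>A space of bounded geometry is a countable union of finite balls.\<close>
lemma bounded_geometry_countable:
  assumes bg: "bounded_geometry X d"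
  shows "countable X"
proof (cases "X = {}")
  case False
  then obtain x0 where x0: "x0 \<in> X" by blast
  have "finite {y\<in>X. d x0 y \<le> real n + 1}" for n :: nat
    using bounded_geometryD[OF bg, of "real n + 1"] x0 by auto
  then have "countable (\<Union>n::nat. {y\<in>X. d x0 y \<le> real n + 1})"
    by (intro countable_UN) (auto intro: countable_finite)
  moreover have "y \<in> (\<Union>n::nat. {y\<in>X. d x0 y \<le> real n + 1})" if "y \<in> X" for y
  proof -
    obtain n :: nat where "d x0 y \<le> real n" using real_arch_simple by blast
    then show ?thesis using that by (intro UN_I[of n]) auto
  qed
  ultimately show ?thesis by (meson countable_subset subsetI)
qed simp

lemma bounded_geometry_colouring:
  assumes ms: "metric_on X d" and bg: "bounded_geometry X d" and "R > 0"
  obtains col and N :: nat where "\<And>y. y \<in> X \<Longrightarrow> col y \<le> N"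
    and "\<And>y z. y \<in> X \<Longrightarrow> z \<in> X \<Longrightarrow> y \<noteq> z \<Longrightarrow> d y z \<le> R \<Longrightarrow> col y \<noteq> col z"
proof -
  obtain N where N: "\<forall>x\<in>X. finite {y\<in>X. d x y \<le> R} \<and> card {y\<in>X. d x y \<le> R} \<le> N"
    using bounded_geometryD[OF bg \<open>R > 0\<close>] by blast
  define adj where "adj y z \<longleftrightarrow> y \<in> X \<and> z \<in> X \<and> d y z \<le> R" for y z
  have "adj z y" if "adj y z" for y z
    using that metric_sym[OF ms] unfolding adj_def by auto
  moreover have "{z\<in>X. adj y z} = {z\<in>X. d y z \<le> R}" if "y \<in> X" for y
    using that unfolding adj_def by auto
  ultimately obtain col where col: "\<forall>y\<in>X. col y \<le> N"
    "\<forall>y\<in>X. \<forall>z\<in>X. adj y z \<longrightarrow> y \<noteq> z \<longrightarrow> col y \<noteq> col z"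
    using bounded_degree_colouring[OF bounded_geometry_countable[OF bg], of adj N] N by auto
  show ?thesis
  proof (rule that)
    show "col y \<le> N" if "y \<in> X" for y using col(1) that by blast
    show "col y \<noteq> col z" if "y \<in> X" "z \<in> X" "y \<noteq> z" "d y z \<le> R" for y z
      using col(2) that unfolding adj_def by blast
  qed
qed


section \<open>Ultralimits of bounded real functions\<close>

definition is_ultralim :: "'a set set \<Rightarrow> 'a set \<Rightarrow> ('a \<Rightarrow> real) \<Rightarrow> real \<Rightarrow> bool" where
  "is_ultralim \<omega> D g r \<longleftrightarrow> (\<forall>U. open U \<longrightarrow> r \<in> U \<longrightarrow> {x\<in>D. g x \<in> U} \<in> \<omega>)"

text \<open>Limits along an ultrafilter are unique, since the reals are Hausdorff.\<close>
lemma is_ultralim_unique: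
  assumes uf: "ultrafilter_on X \<omega>" and "is_ultralim \<omega> D g r" and "is_ultralim \<omega> D g r'"
  shows "r = r'"
proof (rule ccontr)
  assume "r \<noteq> r'"
  from hausdorff[OF this] obtain U V where UV: "open U" "open V" "r \<in> U" "r' \<in> V" "U \<inter> V = {}"
    by (elim exE conjE)
  have "{x\<in>D. g x \<in> U} \<in> \<omega>" "{x\<in>D. g x \<in> V} \<in> \<omega>"
    using assms(2,3) UV unfolding is_ultralim_def by blast+
  then have "{x\<in>D. g x \<in> U} \<inter> {x\<in>D. g x \<in> V} \<in> \<omega>" by (rule uf_Int[OF uf])
  moreover have "{x\<in>D. g x \<in> U} \<inter> {x\<in>D. g x \<in> V} = {}" using UV(5) by auto
  ultimately show False using uf_empty[OF uf] by simp
qed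

text \<open>Every bounded function has an ultralimit: the supremum of the levels it eventually
  exceeds.\<close>
lemma is_ultralim_exists:
  assumes uf: "ultrafilter_on X \<omega>" and D: "D \<in> \<omega>" and B: "\<forall>x\<in>D. \<bar>g x\<bar> \<le> B"
  shows "\<exists>r. is_ultralim \<omega> D g r"
proof -
  have DX: "D \<subseteq> X" using uf_subset[OF uf D] .
  define S where "S = {y. {x\<in>D. y \<le> g x} \<in> \<omega>}"
  have "{x\<in>D. - B \<le> g x} = D" using B by force
  then have "- B \<in> S" unfolding S_def using D by simp
  then have S_ne: "S \<noteq> {}" by blast
  have bdd: "bdd_above S"
  proof (rule bdd_aboveI)
    fix y assume "y \<in> S"
    show "y \<le> B + 1"
    proof (rule ccontr)
      assume "\<not> y \<le> B + 1"
      then have empty: "{x\<in>D. y \<le> g x} = {}" using B by force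
      have "{x\<in>D. y \<le> g x} \<in> \<omega>" using \<open>y \<in> S\<close> unfolding S_def by simp
      then show False using uf_empty[OF uf] unfolding empty by simp
    qed
  qed
  have "is_ultralim \<omega> D g (Sup S)" unfolding is_ultralim_def
  proof (intro allI impI)
    fix U :: "real set" assume U: "open U" "Sup S \<in> U"
    obtain e where e: "e > 0" "ball (Sup S) e \<subseteq> U" using openE[OF U] by blast
    obtain y where y: "y \<in> S" "Sup S - e/2 < y"
      using less_cSup_iff[OF S_ne bdd, of "Sup S - e/2"] e(1) by auto
    have below: "{x\<in>D. Sup S - e/2 \<le> g x} \<in> \<omega>"
      by (rule uf_mono[OF uf _ _ ]) (use y DX in \<open>auto simp: S_def\<close>)
    have "Sup S + e/2 \<notin> S"
    proof
      assume "Sup S + e/2 \<in> S"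
      then have "Sup S + e/2 \<le> Sup S" by (rule cSup_upper[OF _ bdd])
      then show False using e(1) by simp
    qed
    then have "X - {x\<in>D. Sup S + e/2 \<le> g x} \<in> \<omega>"
      using uf_compl[OF uf, of "{x\<in>D. Sup S + e/2 \<le> g x}"] DX unfolding S_def by auto
    then have "(X - {x\<in>D. Sup S + e/2 \<le> g x}) \<inter> {x\<in>D. Sup S - e/2 \<le> g x} \<in> \<omega>"
      using uf_Int[OF uf _ below] by blast
    moreover have "(X - {x\<in>D. Sup S + e/2 \<le> g x}) \<inter> {x\<in>D. Sup S - e/2 \<le> g x} \<subseteq> {x\<in>D. g x \<in> U}"
    proof
      fix x assume "x \<in> (X - {x\<in>D. Sup S + e/2 \<le> g x}) \<inter> {x\<in>D. Sup S - e/2 \<le> g x}"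
      then have "x \<in> D" "g x \<in> ball (Sup S) e" using e(1) by (auto simp: dist_real_def)
      then show "x \<in> {x\<in>D. g x \<in> U}" using e(2) by auto
    qed
    ultimately show "{x\<in>D. g x \<in> U} \<in> \<omega>" using uf_mono[OF uf] DX by blast
  qed
  then show ?thesis by blast
qed

lemma is_ultralim_ultralim_real:
  assumes uf: "ultrafilter_on X \<omega>" and "D \<in> \<omega>" and "\<forall>x\<in>D. \<bar>g x\<bar> \<le> B"
  shows "is_ultralim \<omega> D g (ultralim_real \<omega> D g)"
proof -
  obtain r where r: "is_ultralim \<omega> D g r" using is_ultralim_exists[OF assms] by blast
  have "ultralim_real \<omega> D g = r"
    unfolding ultralim_real_def is_ultralim_def[symmetric]
    using r is_ultralim_unique[OF uf _ r] by (rule the_equality)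
  then show ?thesis using r by simp
qed

lemma is_ultralim_lower_bound:
  assumes uf: "ultrafilter_on X \<omega>" and r: "is_ultralim \<omega> D g r" and "{x\<in>D. m \<le> g x} \<in> \<omega>"
  shows "m \<le> r"
proof (rule ccontr)
  assume "\<not> m \<le> r"
  then have "r \<in> {..<m}" by simp
  then have "{x\<in>D. g x \<in> {..<m}} \<in> \<omega>" using r open_lessThan unfolding is_ultralim_def by blast
  then have "{x\<in>D. g x \<in> {..<m}} \<inter> {x\<in>D. m \<le> g x} \<in> \<omega>" using uf_Int[OF uf] assms(3) by blast
  moreover have "{x\<in>D. g x \<in> {..<m}} \<inter> {x\<in>D. m \<le> g x} = {}" by auto
  ultimately show False using uf_empty[OF uf] by simp
qed

lemma is_ultralim_upper_bound:
  assumes uf: "ultrafilter_on X \<omega>" and r: "is_ultralim \<omega> D g r" and "{x\<in>D. g x \<le> m} \<in> \<omega>"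
  shows "r \<le> m"
proof (rule ccontr)
  assume "\<not> r \<le> m"
  then have "r \<in> {m<..}" by simp
  then have "{x\<in>D. g x \<in> {m<..}} \<in> \<omega>" using r open_greaterThan unfolding is_ultralim_def by blast
  then have "{x\<in>D. g x \<in> {m<..}} \<inter> {x\<in>D. g x \<le> m} \<in> \<omega>" using uf_Int[OF uf] assms(3) by blast
  moreover have "{x\<in>D. g x \<in> {m<..}} \<inter> {x\<in>D. g x \<le> m} = {}" by auto
  ultimately show False using uf_empty[OF uf] by simp
qed

lemma is_ultralim_cong:
  assumes uf: "ultrafilter_on X \<omega>" and r: "is_ultralim \<omega> D g r"
    and E: "E \<in> \<omega>" "E \<subseteq> D'" "D' \<subseteq> X" and agree: "\<And>x. x \<in> E \<Longrightarrow> x \<in> D \<and> g x = g' x"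
  shows "is_ultralim \<omega> D' g' r"
  unfolding is_ultralim_def
proof (intro allI impI)
  fix U assume "open U" "r \<in> U"
  then have "{x\<in>D. g x \<in> U} \<inter> E \<in> \<omega>" using r uf_Int[OF uf _ E(1)] unfolding is_ultralim_def by blast
  moreover have "{x\<in>D. g x \<in> U} \<inter> E \<subseteq> {x\<in>D'. g' x \<in> U}" using agree E(2) by auto
  ultimately show "{x\<in>D'. g' x \<in> U} \<in> \<omega>" using uf_mono[OF uf] E(3) by blast
qed


section \<open>Partial translations and their limits\<close>

lemma partial_translationD:
  assumes "partial_translation X d D t"
  shows "D \<subseteq> X" "\<And>x. x \<in> D \<Longrightarrow> t x \<in> X" "\<exists>K. \<forall>x\<in>D. d x (t x) \<le> K"
  using assms unfolding partial_translation_def by auto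

lemma translate_uf_eq:
  assumes uf: "ultrafilter_on X \<omega>" and pt: "partial_translation X d D t" and D: "D \<in> \<omega>"
  shows "translate_uf X \<omega> D t = {A. A \<subseteq> X \<and> {x\<in>D. t x \<in> A} \<in> \<omega>}"
proof -
  define \<eta> where "\<eta> = {A. A \<subseteq> X \<and> {x\<in>D. t x \<in> A} \<in> \<omega>}"
  have tX: "{x\<in>D. t x \<in> X} = D" using partial_translationD[OF pt] by auto
  have \<eta>_uf: "ultrafilter_on X \<eta>"
    unfolding ultrafilter_on_def
  proof (intro conjI allI impI)
    show "\<eta> \<subseteq> Pow X" "X \<in> \<eta>" unfolding \<eta>_def using D tX by auto
  next
    fix A B assume AB: "A \<subseteq> X" "B \<subseteq> X" "A \<inter> B = {}"
    have "{x\<in>D. t x \<in> A} \<subseteq> X" "{x\<in>D. t x \<in> B} \<subseteq> X"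
      "{x\<in>D. t x \<in> A} \<inter> {x\<in>D. t x \<in> B} = {}"
      using AB partial_translationD(1)[OF pt] by auto
    note preimages = uf_disjoint_union[OF uf this]
    have "{x\<in>D. t x \<in> A \<union> B} = {x\<in>D. t x \<in> A} \<union> {x\<in>D. t x \<in> B}" by auto
    then show "(A \<union> B \<in> \<eta>) = (A \<in> \<eta> \<or> B \<in> \<eta>)" "\<not> (A \<in> \<eta> \<and> B \<in> \<eta>)"
      using preimages AB unfolding \<eta>_def by auto
  qed
  show ?thesis unfolding translate_uf_def \<eta>_def[symmetric]
  proof (rule the_equality)
    show "\<eta> \<in> betaX X \<and> (\<forall>A. A \<subseteq> X \<longrightarrow> A \<in> \<eta> \<longrightarrow> {x \<in> D. t x \<in> A} \<in> \<omega>)"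
      using \<eta>_uf unfolding betaX_def \<eta>_def by auto
  next
    fix \<eta>' assume h: "\<eta>' \<in> betaX X \<and> (\<forall>A. A \<subseteq> X \<longrightarrow> A \<in> \<eta>' \<longrightarrow> {x \<in> D. t x \<in> A} \<in> \<omega>)"
    then have \<eta>'_uf: "ultrafilter_on X \<eta>'" unfolding betaX_def by auto
    then have sub: "\<eta>' \<subseteq> \<eta>" using h uf_subset unfolding \<eta>_def by blast
    have "A \<in> \<eta>'" if A: "A \<in> \<eta>" for A
    proof (rule ccontr)
      assume "A \<notin> \<eta>'"
      have AX: "A \<subseteq> X" using A unfolding \<eta>_def by simp
      then have "X - A \<in> \<eta>" using uf_compl[OF \<eta>'_uf AX] \<open>A \<notin> \<eta>'\<close> sub by blast
      then show False using uf_compl[OF \<eta>_uf AX] A by simp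
    qed
    then show "\<eta>' = \<eta>" using sub by blast
  qed
qed

lemma translate_uf_mem:
  assumes "ultrafilter_on X \<omega>" "partial_translation X d D t" "D \<in> \<omega>" "A \<subseteq> X"
  shows "A \<in> translate_uf X \<omega> D t \<longleftrightarrow> {x\<in>D. t x \<in> A} \<in> \<omega>"
  using translate_uf_eq[OF assms(1-3)] assms(4) by auto

lemma translate_uf_eqI:
  assumes uf: "ultrafilter_on X \<omega>"
    and p: "partial_translation X d D t" "D \<in> \<omega>"
    and p': "partial_translation X d D' t'" "D' \<in> \<omega>"
    and E: "{x\<in>D\<inter>D'. t x = t' x} \<in> \<omega>"
  shows "translate_uf X \<omega> D t = translate_uf X \<omega> D' t'"
proof -
  have DX: "D \<subseteq> X" "D' \<subseteq> X" using partial_translationD(1)[OF p(1)] partial_translationD(1)[OF p'(1)] .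
  have "{x\<in>D. t x \<in> A} \<in> \<omega> \<longleftrightarrow> {x\<in>D'. t' x \<in> A} \<in> \<omega>" for A
  proof -
    let ?E = "{x\<in>D\<inter>D'. t x = t' x}"
    have eq: "{x\<in>D. t x \<in> A} \<inter> ?E = {x\<in>D'. t' x \<in> A} \<inter> ?E" by auto
    show ?thesis
    proof
      assume "{x\<in>D. t x \<in> A} \<in> \<omega>"
      then have "{x\<in>D. t x \<in> A} \<inter> ?E \<in> \<omega>" using uf_Int[OF uf _ E] by blast
      then have "{x\<in>D'. t' x \<in> A} \<inter> ?E \<in> \<omega>" unfolding eq .
      then show "{x\<in>D'. t' x \<in> A} \<in> \<omega>" using uf_mono[OF uf] DX by blast
    next
      assume "{x\<in>D'. t' x \<in> A} \<in> \<omega>"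
      then have "{x\<in>D'. t' x \<in> A} \<inter> ?E \<in> \<omega>" using uf_Int[OF uf _ E] by blast
      then have "{x\<in>D. t x \<in> A} \<inter> ?E \<in> \<omega>" unfolding eq .
      then show "{x\<in>D. t x \<in> A} \<in> \<omega>" using uf_mono[OF uf] DX by blast
    qed
  qed
  then show ?thesis using translate_uf_eq[OF uf p] translate_uf_eq[OF uf p'] by simp
qed

text \<open>Conversely, in a space, partial translations with the same limit agree \<omega>-almost
  everywhere: otherwise colour the graph of pairs at bounded distance; the colour of t x is
  \<omega>-almost surely some fixed c, and the set of points of colour c then separates the two
  limits.\<close>
lemma translate_uf_eqD:
  assumes sp: "is_space X d" and uf: "ultrafilter_on X \<omega>"
    and p: "partial_translation X d D t" "D \<in> \<omega>"
    and p': "partial_translation X d D' t'" "D' \<in> \<omega>"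
    and eq: "translate_uf X \<omega> D t = translate_uf X \<omega> D' t'"
  shows "{x\<in>D\<inter>D'. t x = t' x} \<in> \<omega>"
proof (rule ccontr)
  assume "{x\<in>D\<inter>D'. t x = t' x} \<notin> \<omega>"
  have ms: "metric_on X d" and bg: "bounded_geometry X d" using sp unfolding is_space_def by auto
  have DX: "D \<subseteq> X" "D' \<subseteq> X" and tX: "\<And>x. x \<in> D \<Longrightarrow> t x \<in> X" "\<And>x. x \<in> D' \<Longrightarrow> t' x \<in> X"
    using partial_translationD(1,2)[OF p(1)] partial_translationD(1,2)[OF p'(1)] by auto
  obtain K K' where K: "\<forall>x\<in>D. d x (t x) \<le> K" and K': "\<forall>x\<in>D'. d x (t' x) \<le> K'"
    using partial_translationD(3)[OF p(1)] partial_translationD(3)[OF p'(1)] by blast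
  define R where "R = max 1 (K + K')"
  have "R > 0" unfolding R_def by simp
  then obtain col and N :: nat where col_bound: "\<And>y. y \<in> X \<Longrightarrow> col y \<le> N"
    and col_proper: "\<And>y z. y \<in> X \<Longrightarrow> z \<in> X \<Longrightarrow> y \<noteq> z \<Longrightarrow> d y z \<le> R \<Longrightarrow> col y \<noteq> col z"
    by (rule bounded_geometry_colouring[OF ms bg]) blast
  define E where "E = {x\<in>D\<inter>D'. t x \<noteq> t' x}"
  have "{x\<in>D\<inter>D'. t x = t' x} \<union> E = D \<inter> D'" unfolding E_def by auto
  then have "{x\<in>D\<inter>D'. t x = t' x} \<union> E \<in> \<omega>" using uf_Int[OF uf p(2) p'(2)] by simp
  moreover have "{x\<in>D\<inter>D'. t x = t' x} \<subseteq> X" "E \<subseteq> X" "{x\<in>D\<inter>D'. t x = t' x} \<inter> E = {}"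
    using DX unfolding E_def by auto
  ultimately have "E \<in> \<omega>" using uf_disjoint_union(1)[OF uf] \<open>_ \<notin> \<omega>\<close> by blast
  moreover have "E = (\<Union>c\<in>{..N}. {x\<in>E. col (t x) = c})" using col_bound tX unfolding E_def by auto
  ultimately have "(\<Union>c\<in>{..N}. {x\<in>E. col (t x) = c}) \<in> \<omega>" by simp
  moreover have "{x\<in>E. col (t x) = c} \<subseteq> X" for c using DX unfolding E_def by auto
  ultimately obtain c where c: "{x\<in>E. col (t x) = c} \<in> \<omega>"
    using uf_Un_finite[OF uf, of "{..N}" "\<lambda>c. {x\<in>E. col (t x) = c}"] by blast
  define A where "A = {z\<in>X. col z = c}"
  have "{x\<in>D. t x \<in> A} \<in> \<omega>"
    by (rule uf_mono[OF uf c]) (use tX DX in \<open>auto simp: A_def E_def\<close>)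
  then have "{x\<in>D'. t' x \<in> A} \<in> \<omega>"
    using translate_uf_mem[OF uf p, of A] translate_uf_mem[OF uf p', of A] eq by (simp add: A_def)
  then obtain x where x: "x \<in> E" "col (t x) = c" "t' x \<in> A"
    using uf_nonempty[OF uf uf_Int[OF uf c]] by blast
  then have xs: "x \<in> D" "x \<in> D'" "t x \<noteq> t' x" "x \<in> X" using DX unfolding E_def by auto
  have "d (t x) (t' x) \<le> d x (t x) + d x (t' x)"
    using metric_triangle[OF ms, of "t x" x "t' x"] metric_sym[OF ms, of "t x" x] tX xs by auto
  also have "\<dots> \<le> K + K'" using K K' xs by (simp add: add_mono)
  also have "\<dots> \<le> R" unfolding R_def by simp
  finally have "col (t x) \<noteq> col (t' x)" using col_proper tX xs by blast
  then show False using x unfolding A_def by auto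
qed

lemma translations_bounded_distance:
  assumes ms: "metric_on X d"
    and p: "partial_translation X d D t" and p': "partial_translation X d D' t'"
  shows "\<exists>B. \<forall>x\<in>D\<inter>D'. \<bar>d (t x) (t' x)\<bar> \<le> B"
proof -
  obtain K K' where K: "\<forall>x\<in>D. d x (t x) \<le> K" and K': "\<forall>x\<in>D'. d x (t' x) \<le> K'"
    using partial_translationD(3)[OF p] partial_translationD(3)[OF p'] by blast
  have "\<bar>d (t x) (t' x)\<bar> \<le> K + K'" if x: "x \<in> D \<inter> D'" for x
  proof -
    have xX: "x \<in> X" "t x \<in> X" "t' x \<in> X" using x partial_translationD(1,2)[OF p] partial_translationD(1,2)[OF p'] by auto
    have "d (t x) (t' x) \<le> d x (t x) + d x (t' x)"
      using metric_triangle[OF ms xX(2,1,3)] metric_sym[OF ms xX(2,1)] by simp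
    moreover have "d x (t x) \<le> K" "d x (t' x) \<le> K'" using K K' x by auto
    ultimately show ?thesis using metric_nonneg[OF ms xX(2,3)] by linarith
  qed
  then show ?thesis by blast
qed

lemma d_omega_eq:
  assumes sp: "is_space X d" and uf: "ultrafilter_on X \<omega>"
    and p: "partial_translation X d D t" "D \<in> \<omega>"
    and p': "partial_translation X d D' t'" "D' \<in> \<omega>"
  shows "is_ultralim \<omega> (D \<inter> D') (\<lambda>x. d (t x) (t' x))
           (d_omega X d \<omega> (translate_uf X \<omega> D t) (translate_uf X \<omega> D' t'))"
proof -
  have ms: "metric_on X d" using sp unfolding is_space_def by auto
  have lim: "is_ultralim \<omega> (E \<inter> E') (\<lambda>x. d (s x) (s' x)) (ultralim_real \<omega> (E \<inter> E') (\<lambda>x. d (s x) (s' x)))"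
    if q: "partial_translation X d E s" "E \<in> \<omega>" "partial_translation X d E' s'" "E' \<in> \<omega>"
    for E s E' s'
  proof -
    obtain B where "\<forall>x\<in>E\<inter>E'. \<bar>d (s x) (s' x)\<bar> \<le> B"
      using translations_bounded_distance[OF ms q(1,3)] by blast
    then show ?thesis by (rule is_ultralim_ultralim_real[OF uf uf_Int[OF uf q(2,4)]])
  qed
  let ?r = "ultralim_real \<omega> (D \<inter> D') (\<lambda>x. d (t x) (t' x))"
  have "d_omega X d \<omega> (translate_uf X \<omega> D t) (translate_uf X \<omega> D' t') = ?r"
    unfolding d_omega_def
  proof (rule the_equality)
    fix r assume "\<exists>E s E' s'. partial_translation X d E s \<and> E \<in> \<omega> \<and>
        translate_uf X \<omega> E s = translate_uf X \<omega> D t \<and> partial_translation X d E' s' \<and> E' \<in> \<omega> \<and>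
        translate_uf X \<omega> E' s' = translate_uf X \<omega> D' t' \<and> ultralim_real \<omega> (E \<inter> E') (\<lambda>x. d (s x) (s' x)) = r"
    then obtain E s E' s' where q: "partial_translation X d E s" "E \<in> \<omega>"
      "translate_uf X \<omega> E s = translate_uf X \<omega> D t" "partial_translation X d E' s'" "E' \<in> \<omega>"
      "translate_uf X \<omega> E' s' = translate_uf X \<omega> D' t'"
      "ultralim_real \<omega> (E \<inter> E') (\<lambda>x. d (s x) (s' x)) = r" by blast
    have "{x\<in>E\<inter>D. s x = t x} \<inter> {x\<in>E'\<inter>D'. s' x = t' x} \<in> \<omega>"
      using uf_Int[OF uf translate_uf_eqD[OF sp uf q(1,2) p q(3)] translate_uf_eqD[OF sp uf q(4,5) p' q(6)]] .
    moreover have "E \<inter> E' \<subseteq> X" using partial_translationD(1)[OF q(1)] by auto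
    ultimately have "is_ultralim \<omega> (E \<inter> E') (\<lambda>x. d (s x) (s' x)) ?r"
      by (intro is_ultralim_cong[OF uf lim[OF p p']]) auto
    then show "r = ?r" using is_ultralim_unique[OF uf lim[OF q(1,2,4,5)]] q(7) by simp
  qed (use p p' in blast)
  then show ?thesis using lim[OF p p'] by simp
qed


section \<open>Finite measures on the subsets of a set\<close>

lemma pushforward_to_count_space:
  assumes sp: "space \<mu> = S" and sets: "sets \<mu> = Pow S" and A: "A \<subseteq> S"
    and g: "g \<in> A \<rightarrow> Y"
  shows "space (distr (restrict_space \<mu> A) (count_space Y) g) = Y"
    "sets (distr (restrict_space \<mu> A) (count_space Y) g) = Pow Y"
    "\<And>B. B \<subseteq> Y \<Longrightarrow> emeasure (distr (restrict_space \<mu> A) (count_space Y) g) B = emeasure \<mu> {a\<in>A. g a \<in> B}"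
proof -
  have space_A: "space (restrict_space \<mu> A) = A" using A sp by (simp add: space_restrict_space Int_absorb2)
  have "sets (restrict_space \<mu> A) = sets (restrict_space (count_space S) A)"
    by (simp add: sets_restrict_space sets)
  also have "\<dots> = Pow A" using A by (simp add: sets_restrict_space_count_space Int_absorb1)
  finally have sets_A: "sets (restrict_space \<mu> A) = Pow A" .
  have meas: "g \<in> measurable (restrict_space \<mu> A) (count_space Y)"
    by (rule measurableI) (use g in \<open>auto simp: space_A sets_A\<close>)
  show "space (distr (restrict_space \<mu> A) (count_space Y) g) = Y"
    "sets (distr (restrict_space \<mu> A) (count_space Y) g) = Pow Y" by simp_all
  fix B assume "B \<subseteq> Y"
  then have "emeasure (distr (restrict_space \<mu> A) (count_space Y) g) B
      = emeasure (restrict_space \<mu> A) {a\<in>A. g a \<in> B}"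
    using emeasure_distr[OF meas, of B] space_A by (simp add: vimage_def Int_def conj_commute)
  also have "\<dots> = emeasure \<mu> {a\<in>A. g a \<in> B}"
    by (rule emeasure_restrict_space) (use A sp sets in auto)
  finally show "emeasure (distr (restrict_space \<mu> A) (count_space Y) g) B = emeasure \<mu> {a\<in>A. g a \<in> B}" .
qed

text \<open>On a countable set, an inequality c \<mu>(G) \<le> b + \<mu>(S - G) valid for all finite G passes
  to the whole space, by exhausting it with an increasing sequence of finite sets.\<close>
lemma finite_measure_bound_by_exhaustion:
  assumes fm: "finite_measure \<mu>" and cnt: "countable (space \<mu>)" and sets: "sets \<mu> = Pow (space \<mu>)"
    and bound: "\<And>G. finite G \<Longrightarrow> G \<subseteq> space \<mu> \<Longrightarrow> c * measure \<mu> G \<le> b + measure \<mu> (space \<mu> - G)"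
  shows "c * measure \<mu> (space \<mu>) \<le> b"
proof (cases "space \<mu> = {}")
  case True
  then show ?thesis using bound[of "{}"] by simp
next
  case False
  define G where "G n = from_nat_into (space \<mu>) ` {..n}" for n
  have G_sub: "G n \<subseteq> space \<mu>" for n using from_nat_into[OF False] unfolding G_def by blast
  have "incseq G" unfolding G_def incseq_def by auto
  moreover have "(\<Union>n. G n) = space \<mu>"
    using range_from_nat_into[OF False cnt] G_sub unfolding G_def by blast
  ultimately have lim: "(\<lambda>n. measure \<mu> (G n)) \<longlonglongrightarrow> measure \<mu> (space \<mu>)"
    using finite_measure.finite_Lim_measure_incseq[OF fm, of G] G_sub sets by auto
  have "measure \<mu> (space \<mu> - G n) = measure \<mu> (space \<mu>) - measure \<mu> (G n)" for n
    using finite_measure.finite_measure_Diff[OF fm, of "space \<mu>" "G n"] G_sub sets by auto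
  then have le: "c * measure \<mu> (G n) - measure \<mu> (space \<mu> - G n) \<le> b" for n
    using bound[of "G n"] G_sub unfolding G_def by fastforce
  have "(\<lambda>n. c * measure \<mu> (G n) - measure \<mu> (space \<mu> - G n))
      \<longlonglongrightarrow> c * measure \<mu> (space \<mu>) - (measure \<mu> (space \<mu>) - measure \<mu> (space \<mu>))"
    unfolding \<open>\<And>n. measure \<mu> (space \<mu> - G n) = _\<close> by (intro tendsto_intros lim)
  then have "c * measure \<mu> (space \<mu>) - (measure \<mu> (space \<mu>) - measure \<mu> (space \<mu>)) \<le> b"
    by (rule LIMSEQ_le_const2) (use le in blast)
  then show ?thesis by simp
qed


section \<open>The limit space of an ultrafilter\<close>

locale limit_space =
  fixes X :: "'a set" and d :: "'a \<Rightarrow> 'a \<Rightarrow> real" and \<omega> :: "'a set set"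
  assumes space: "is_space X d" and uf: "ultrafilter_on X \<omega>"
begin

abbreviation X\<omega> :: "'a set set set" where "X\<omega> \<equiv> X_omega X d \<omega>"

abbreviation d\<omega> :: "'a set set \<Rightarrow> 'a set set \<Rightarrow> real" where "d\<omega> \<equiv> d_omega X d \<omega>"

definition representative :: "'a set set \<Rightarrow> 'a set \<times> ('a \<Rightarrow> 'a)" where
  "representative \<alpha> =
     (SOME (D, t). partial_translation X d D t \<and> D \<in> \<omega> \<and> translate_uf X \<omega> D t = \<alpha>)"

definition rdom :: "'a set set \<Rightarrow> 'a set" where "rdom \<alpha> = fst (representative \<alpha>)"

definition rmap :: "'a set set \<Rightarrow> 'a \<Rightarrow> 'a" where "rmap \<alpha> = snd (representative \<alpha>)"

lemma representative:
  assumes "\<alpha> \<in> X\<omega>"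
  shows "partial_translation X d (rdom \<alpha>) (rmap \<alpha>)" "rdom \<alpha> \<in> \<omega>"
    "translate_uf X \<omega> (rdom \<alpha>) (rmap \<alpha>) = \<alpha>"
proof -
  obtain D t where "partial_translation X d D t" "D \<in> \<omega>" "translate_uf X \<omega> D t = \<alpha>"
    using assms unfolding X_omega_def by blast
  then have "\<exists>p. case p of (D, t) \<Rightarrow>
      partial_translation X d D t \<and> D \<in> \<omega> \<and> translate_uf X \<omega> D t = \<alpha>" by auto
  then have "case representative \<alpha> of (D, t) \<Rightarrow>
      partial_translation X d D t \<and> D \<in> \<omega> \<and> translate_uf X \<omega> D t = \<alpha>"
    unfolding representative_def by (rule someI_ex)
  then show "partial_translation X d (rdom \<alpha>) (rmap \<alpha>)" "rdom \<alpha> \<in> \<omega>"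
    "translate_uf X \<omega> (rdom \<alpha>) (rmap \<alpha>) = \<alpha>"
    unfolding rdom_def rmap_def by (simp_all add: split_beta)
qed

lemma rdom_subset: "\<alpha> \<in> X\<omega> \<Longrightarrow> rdom \<alpha> \<subseteq> X"
  using partial_translationD(1)[OF representative(1)] .

lemma rmap_in: "\<alpha> \<in> X\<omega> \<Longrightarrow> x \<in> rdom \<alpha> \<Longrightarrow> rmap \<alpha> x \<in> X"
  using partial_translationD(2)[OF representative(1)] .

lemma d\<omega>_ultralim:
  assumes "\<alpha> \<in> X\<omega>" "\<beta> \<in> X\<omega>"
  shows "is_ultralim \<omega> (rdom \<alpha> \<inter> rdom \<beta>) (\<lambda>x. d (rmap \<alpha> x) (rmap \<beta> x)) (d\<omega> \<alpha> \<beta>)"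
  using d_omega_eq[OF space uf representative(1,2)[OF assms(1)] representative(1,2)[OF assms(2)]]
  unfolding representative(3)[OF assms(1)] representative(3)[OF assms(2)] .

lemma d\<omega>_lower_bound:
  assumes "\<alpha> \<in> X\<omega>" "\<beta> \<in> X\<omega>" and large: "{x\<in>X. P x} \<in> \<omega>"
    and bound: "\<And>x. x \<in> X \<Longrightarrow> P x \<Longrightarrow> x \<in> rdom \<alpha> \<inter> rdom \<beta> \<and> r \<le> d (rmap \<alpha> x) (rmap \<beta> x)"
  shows "r \<le> d\<omega> \<alpha> \<beta>"
proof -
  have "{x\<in>X. P x} \<subseteq> {x\<in>rdom \<alpha> \<inter> rdom \<beta>. r \<le> d (rmap \<alpha> x) (rmap \<beta> x)}" using bound by blast
  then have "{x\<in>rdom \<alpha> \<inter> rdom \<beta>. r \<le> d (rmap \<alpha> x) (rmap \<beta> x)} \<in> \<omega>"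
    using uf_mono[OF uf large] rdom_subset[OF assms(1)] by blast
  then show ?thesis by (rule is_ultralim_lower_bound[OF uf d\<omega>_ultralim[OF assms(1,2)]])
qed

lemma d\<omega>_upper_bound:
  assumes "\<alpha> \<in> X\<omega>" "\<beta> \<in> X\<omega>" and large: "{x\<in>X. P x} \<in> \<omega>"
    and bound: "\<And>x. x \<in> X \<Longrightarrow> P x \<Longrightarrow> x \<in> rdom \<alpha> \<inter> rdom \<beta> \<and> d (rmap \<alpha> x) (rmap \<beta> x) \<le> r"
  shows "d\<omega> \<alpha> \<beta> \<le> r"
proof -
  have "{x\<in>X. P x} \<subseteq> {x\<in>rdom \<alpha> \<inter> rdom \<beta>. d (rmap \<alpha> x) (rmap \<beta> x) \<le> r}" using bound by blast
  then have "{x\<in>rdom \<alpha> \<inter> rdom \<beta>. d (rmap \<alpha> x) (rmap \<beta> x) \<le> r} \<in> \<omega>"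
    using uf_mono[OF uf large] rdom_subset[OF assms(1)] by blast
  then show ?thesis by (rule is_ultralim_upper_bound[OF uf d\<omega>_ultralim[OF assms(1,2)]])
qed

lemma representatives_differ:
  assumes "\<alpha> \<in> X\<omega>" "\<beta> \<in> X\<omega>" "\<alpha> \<noteq> \<beta>"
  shows "{x\<in>rdom \<alpha> \<inter> rdom \<beta>. rmap \<alpha> x \<noteq> rmap \<beta> x} \<in> \<omega>"
proof -
  let ?same = "{x\<in>rdom \<alpha> \<inter> rdom \<beta>. rmap \<alpha> x = rmap \<beta> x}"
  let ?diff = "{x\<in>rdom \<alpha> \<inter> rdom \<beta>. rmap \<alpha> x \<noteq> rmap \<beta> x}"
  have "?same \<notin> \<omega>"
    using translate_uf_eqI[OF uf representative(1,2)[OF assms(1)] representative(1,2)[OF assms(2)]]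
      representative(3) assms by auto
  moreover have "?same \<union> ?diff = rdom \<alpha> \<inter> rdom \<beta>" by auto
  then have "?same \<union> ?diff \<in> \<omega>"
    using uf_Int[OF uf representative(2)[OF assms(1)] representative(2)[OF assms(2)]] by simp
  moreover have "?same \<subseteq> X" "?diff \<subseteq> X" "?same \<inter> ?diff = {}" using rdom_subset[OF assms(1)] by auto
  ultimately show ?thesis using uf_disjoint_union(1)[OF uf] by blast
qed


definition translates_within :: "nat \<Rightarrow> 'a set set set" where
  "translates_within K = {translate_uf X \<omega> D t | D t.
     partial_translation X d D t \<and> D \<in> \<omega> \<and> (\<forall>x\<in>D. d x (t x) \<le> real K)}"

lemma translates_within_subset: "translates_within K \<subseteq> X\<omega>"
  unfolding translates_within_def X_omega_def by blast

lemma translates_within_displacement: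
  assumes "\<alpha> \<in> translates_within K"
  shows "{x\<in>rdom \<alpha>. d x (rmap \<alpha> x) \<le> real K} \<in> \<omega>"
proof -
  obtain D t where p: "partial_translation X d D t" "D \<in> \<omega>" "\<forall>x\<in>D. d x (t x) \<le> real K"
    and \<alpha>: "\<alpha> = translate_uf X \<omega> D t" using assms unfolding translates_within_def by blast
  have "\<alpha> \<in> X\<omega>" using assms translates_within_subset by blast
  then have "{x\<in>D \<inter> rdom \<alpha>. t x = rmap \<alpha> x} \<in> \<omega>"
    using translate_uf_eqD[OF space uf p(1,2) representative(1,2)] representative(3) \<alpha> by simp
  moreover have "{x\<in>D \<inter> rdom \<alpha>. t x = rmap \<alpha> x} \<subseteq> {x\<in>rdom \<alpha>. d x (rmap \<alpha> x) \<le> real K}"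
    using p(3) by auto
  ultimately show ?thesis using uf_mono[OF uf] rdom_subset[OF \<open>\<alpha> \<in> X\<omega>\<close>] by blast
qed

text \<open>By bounded geometry there are only finitely many such points: at a point x common to
  the relevant \<omega>-large sets, finitely many of them have distinct values rmap \<alpha> x in a ball.\<close>
lemma finite_translates_within: "finite (translates_within K)"
proof (rule ccontr)
  assume "infinite (translates_within K)"
  have bg: "bounded_geometry X d" using space unfolding is_space_def by simp
  obtain N where N: "\<forall>x\<in>X. finite {y\<in>X. d x y \<le> real K + 1} \<and> card {y\<in>X. d x y \<le> real K + 1} \<le> N"
    using bounded_geometryD[OF bg, of "real K + 1"] by auto
  obtain F where F: "F \<subseteq> translates_within K" "finite F" "card F = Suc N"
    using infinite_arbitrarily_large[OF \<open>infinite _\<close>] by blast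
  have FX: "F \<subseteq> X\<omega>" using F(1) translates_within_subset by blast
  define V where "V p = (if fst p = snd p then {x\<in>rdom (fst p). d x (rmap (fst p) x) \<le> real K}
      else {x\<in>rdom (fst p) \<inter> rdom (snd p). rmap (fst p) x \<noteq> rmap (snd p) x})" for p
  have "V p \<in> \<omega>" if p: "p \<in> F \<times> F" for p
  proof (cases "fst p = snd p")
    case True
    have "fst p \<in> translates_within K" using p F(1) by auto
    then show ?thesis using True translates_within_displacement unfolding V_def by simp
  next
    case False
    have "fst p \<in> X\<omega>" "snd p \<in> X\<omega>" using p FX by auto
    then show ?thesis using False representatives_differ unfolding V_def by simp
  qed
  then obtain x where x: "x \<in> X" "\<And>p. p \<in> F \<times> F \<Longrightarrow> x \<in> V p"
    using uf_common_point[OF uf, of "F \<times> F" V] F(2) by blast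
  have "inj_on (\<lambda>\<alpha>. rmap \<alpha> x) F"
  proof (rule inj_onI, rule ccontr)
    fix \<alpha> \<beta> assume "\<alpha> \<in> F" "\<beta> \<in> F" "rmap \<alpha> x = rmap \<beta> x" "\<alpha> \<noteq> \<beta>"
    then show False using x(2)[of "(\<alpha>, \<beta>)"] unfolding V_def by simp
  qed
  moreover have "(\<lambda>\<alpha>. rmap \<alpha> x) ` F \<subseteq> {y\<in>X. d x y \<le> real K + 1}"
    using x(2) rmap_in FX unfolding V_def by fastforce
  ultimately have "card F \<le> card {y\<in>X. d x y \<le> real K + 1}"
    using N x(1) card_inj_on_le by blast
  then show False using N x(1) F(3) by fastforce
qed

text \<open>Every point of X(\<omega>) has a representative of some bounded displacement K.\<close>
lemma countable_X\<omega>: "countable X\<omega>"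
proof -
  have "X\<omega> \<subseteq> (\<Union>K. translates_within K)"
  proof
    fix \<alpha> assume "\<alpha> \<in> X\<omega>"
    then obtain D t where p: "partial_translation X d D t" "D \<in> \<omega>" "\<alpha> = translate_uf X \<omega> D t"
      unfolding X_omega_def by blast
    obtain K0 where "\<forall>x\<in>D. d x (t x) \<le> K0" using partial_translationD(3)[OF p(1)] by blast
    moreover obtain K :: nat where "K0 \<le> real K" using real_arch_simple by blast
    ultimately have "\<forall>x\<in>D. d x (t x) \<le> real K" by force
    then show "\<alpha> \<in> (\<Union>K. translates_within K)" using p unfolding translates_within_def by blast
  qed
  moreover have "countable (\<Union>K. translates_within K)"
    by (intro countable_UN) (auto intro: countable_finite finite_translates_within)
  ultimately show ?thesis by (rule countable_subset)
qed


definition defined_at :: "'a \<Rightarrow> 'a set set set" where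
  "defined_at x = {\<alpha>\<in>X\<omega>. x \<in> rdom \<alpha>}"

text \<open>Localising a measure \<mu> on X(\<omega>) at x \<in> X: push it forward along \<alpha> \<mapsto> rmap \<alpha> x and
  sparsify the resulting finite measure on X.\<close>
lemma sparse_families_at_points:
  assumes msp: "msp_with X d c f"
    and \<mu>: "space \<mu> = X\<omega>" "sets \<mu> = Pow X\<omega>" "emeasure \<mu> X\<omega> < \<infinity>"
  obtains PP where "\<And>x. x \<in> X \<Longrightarrow> sparse_family X d m (f m) (PP x)"
    and "\<And>x. x \<in> X \<Longrightarrow>
      ennreal c * emeasure \<mu> (defined_at x) \<le> emeasure \<mu> {\<alpha>\<in>defined_at x. rmap \<alpha> x \<in> \<Union>(PP x)}"
proof -
  have "\<exists>P. sparse_family X d m (f m) P \<and>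
      ennreal c * emeasure \<mu> (defined_at x) \<le> emeasure \<mu> {\<alpha>\<in>defined_at x. rmap \<alpha> x \<in> \<Union>P}"
    if "x \<in> X" for x
  proof -
    let ?\<nu> = "distr (restrict_space \<mu> (defined_at x)) (count_space X) (\<lambda>\<alpha>. rmap \<alpha> x)"
    have sub: "defined_at x \<subseteq> X\<omega>" unfolding defined_at_def by auto
    have maps: "(\<lambda>\<alpha>. rmap \<alpha> x) \<in> defined_at x \<rightarrow> X"
      using rmap_in unfolding defined_at_def by auto
    note \<nu> = pushforward_to_count_space[OF \<mu>(1,2) sub maps]
    have "{\<alpha>\<in>defined_at x. rmap \<alpha> x \<in> X} = defined_at x" using maps by auto
    then have total: "emeasure ?\<nu> X = emeasure \<mu> (defined_at x)" using \<nu>(3)[OF order_refl] by simp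
    also have "\<dots> \<le> emeasure \<mu> X\<omega>" by (rule emeasure_mono) (use sub \<mu> in auto)
    finally have "emeasure ?\<nu> X < \<infinity>" using \<mu>(3) by (simp add: le_less_trans)
    from msp_withD[OF msp \<nu>(1,2) this, where m = m] obtain P where P: "sparse_family X d m (f m) P"
      "ennreal c * emeasure ?\<nu> X \<le> emeasure ?\<nu> (\<Union>P)" by (elim exE conjE)
    have "\<Union>P \<subseteq> X" using sparse_familyD(1)[OF P(1)] by blast
    then have "emeasure ?\<nu> (\<Union>P) = emeasure \<mu> {\<alpha>\<in>defined_at x. rmap \<alpha> x \<in> \<Union>P}" by (rule \<nu>(3))
    then show ?thesis using P(1) P(2)[unfolded total] by auto
  qed
  then have "\<forall>x\<in>X. \<exists>P. sparse_family X d m (f m) P \<and>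
      ennreal c * emeasure \<mu> (defined_at x) \<le> emeasure \<mu> {\<alpha>\<in>defined_at x. rmap \<alpha> x \<in> \<Union>P}" ..
  from bchoice[OF this] obtain PP where PP: "\<forall>x\<in>X. sparse_family X d m (f m) (PP x) \<and>
      ennreal c * emeasure \<mu> (defined_at x) \<le> emeasure \<mu> {\<alpha>\<in>defined_at x. rmap \<alpha> x \<in> \<Union>(PP x)}"
    by (elim exE)
  show ?thesis by (rule that[of PP]) (use PP in simp_all)
qed

end


section \<open>Sparsifying the limit space\<close>

locale sparsification = limit_space +
  fixes m R :: nat and PP :: "'a \<Rightarrow> 'a set set"
  assumes PP_sparse: "\<And>x. x \<in> X \<Longrightarrow> sparse_family X d m R (PP x)"
begin

definition same_piece :: "'a \<Rightarrow> 'a set set \<Rightarrow> 'a set set \<Rightarrow> bool" where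
  "same_piece x \<alpha> \<beta> \<longleftrightarrow> x \<in> rdom \<alpha> \<and> x \<in> rdom \<beta> \<and> (\<exists>B\<in>PP x. rmap \<alpha> x \<in> B \<and> rmap \<beta> x \<in> B)"

definition related :: "'a set set \<Rightarrow> 'a set set \<Rightarrow> bool" where
  "related \<alpha> \<beta> \<longleftrightarrow> {x\<in>X. same_piece x \<alpha> \<beta>} \<in> \<omega>"

definition kept :: "'a set set set" where
  "kept = {\<alpha>\<in>X\<omega>. related \<alpha> \<alpha>}"

definition class_of :: "'a set set \<Rightarrow> 'a set set set" where
  "class_of \<alpha> = {\<beta>\<in>X\<omega>. related \<alpha> \<beta>}"

definition classes :: "'a set set set set" where
  "classes = class_of ` kept"

lemma piece_unique:
  assumes "x \<in> X" "B \<in> PP x" "B' \<in> PP x" "y \<in> B" "y \<in> B'"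
  shows "B = B'"
  using disjointD[OF sparse_familyD(2)[OF PP_sparse[OF assms(1)]] assms(2,3)] assms(4,5) by blast

lemma same_piece_sym: "same_piece x \<alpha> \<beta> \<Longrightarrow> same_piece x \<beta> \<alpha>"
  unfolding same_piece_def by blast

lemma same_piece_trans:
  assumes "x \<in> X" "same_piece x \<alpha> \<beta>" "same_piece x \<beta> \<gamma>"
  shows "same_piece x \<alpha> \<gamma>"
proof -
  obtain B B' where "B \<in> PP x" "B' \<in> PP x" "rmap \<alpha> x \<in> B" "rmap \<beta> x \<in> B"
    "rmap \<beta> x \<in> B'" "rmap \<gamma> x \<in> B'"
    using assms(2,3) unfolding same_piece_def by blast
  moreover have "B = B'" using piece_unique[OF assms(1)] calculation by blast
  ultimately show ?thesis using assms(2,3) unfolding same_piece_def by blast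
qed

lemma same_piece_far:
  assumes "x \<in> X" "same_piece x \<alpha> \<alpha>" "same_piece x \<beta> \<beta>" "\<not> same_piece x \<alpha> \<beta>"
  shows "real m \<le> d (rmap \<alpha> x) (rmap \<beta> x)"
proof -
  obtain B B' where "B \<in> PP x" "B' \<in> PP x" "rmap \<alpha> x \<in> B" "rmap \<beta> x \<in> B'"
    using assms(2,3) unfolding same_piece_def by blast
  moreover have "B \<noteq> B'" using assms calculation unfolding same_piece_def by blast
  ultimately show ?thesis using sparse_familyD(3)[OF PP_sparse[OF assms(1)]] by blast
qed

lemma same_piece_close:
  assumes "x \<in> X" "same_piece x \<alpha> \<beta>"
  shows "d (rmap \<alpha> x) (rmap \<beta> x) \<le> real R"
  using assms(2) sparse_familyD(4)[OF PP_sparse[OF assms(1)]] unfolding same_piece_def by blast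

lemma related_sym:
  assumes "related \<alpha> \<beta>"
  shows "related \<beta> \<alpha>"
  unfolding related_def
  by (rule uf_Collect_mono[OF uf assms[unfolded related_def]]) (rule same_piece_sym)

lemma related_trans:
  assumes "related \<alpha> \<beta>" "related \<beta> \<gamma>"
  shows "related \<alpha> \<gamma>"
  unfolding related_def
  by (rule uf_Collect_mono[OF uf uf_Collect_conj[OF uf assms[unfolded related_def]]])
    (use same_piece_trans in blast)

lemma classes_related:
  assumes "a \<in> classes" "b \<in> classes" "\<beta> \<in> a" "\<gamma> \<in> b"
  shows "related \<beta> \<gamma> \<longleftrightarrow> a = b"
proof -
  obtain \<alpha> \<alpha>' where a: "a = class_of \<alpha>" and b: "b = class_of \<alpha>'"
    using assms(1,2) unfolding classes_def by blast
  have rel: "related \<alpha> \<beta>" "related \<alpha>' \<gamma>" using assms(3,4) unfolding a b class_of_def by auto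
  show ?thesis
  proof
    assume "related \<beta> \<gamma>"
    then have "related \<alpha> \<alpha>'" using rel related_sym related_trans by blast
    then show "a = b" unfolding a b class_of_def using related_sym related_trans by blast
  next
    assume "a = b"
    then have "related \<alpha> \<gamma>" using assms(4) unfolding a class_of_def by auto
    then show "related \<beta> \<gamma>" using rel related_sym related_trans by blast
  qed
qed

lemma classes_member:
  assumes "a \<in> classes" "\<beta> \<in> a"
  shows "\<beta> \<in> X\<omega>" "related \<beta> \<beta>"
  using assms classes_related[OF assms(1,1,2,2)] unfolding classes_def class_of_def by auto

lemma Union_classes: "\<Union>classes = kept"
proof
  show "\<Union>classes \<subseteq> kept" using classes_member unfolding kept_def by blast
  show "kept \<subseteq> \<Union>classes" unfolding kept_def classes_def class_of_def by blast
qed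

text \<open>The classes form an (m, R)-sparse family in X(\<omega>): distinct classes have
  representatives in distinct pieces \<omega>-almost everywhere, members of one class in the same
  piece.\<close>
lemma classes_sparse: "sparse_family X\<omega> d\<omega> m R classes"
  unfolding sparse_family_def
proof (intro conjI ballI impI)
  show "classes \<subseteq> Pow X\<omega>" using classes_member by blast
  show "disjoint classes"
    by (rule disjointI) (use classes_related classes_member in blast)
next
  fix a b \<beta> \<gamma> assume ab: "a \<in> classes" "b \<in> classes" "a \<noteq> b" "\<beta> \<in> a" "\<gamma> \<in> b"
  note \<beta> = classes_member[OF ab(1,4)] and \<gamma> = classes_member[OF ab(2,5)]
  have "\<not> related \<beta> \<gamma>" using classes_related[OF ab(1,2,4,5)] ab(3) by simp
  then have "X - {x\<in>X. same_piece x \<beta> \<gamma>} \<in> \<omega>"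
    using uf_compl[OF uf, of "{x\<in>X. same_piece x \<beta> \<gamma>}"] unfolding related_def by auto
  moreover have "X - {x\<in>X. same_piece x \<beta> \<gamma>} = {x\<in>X. \<not> same_piece x \<beta> \<gamma>}" by blast
  ultimately have "{x\<in>X. \<not> same_piece x \<beta> \<gamma>} \<in> \<omega>" by simp
  with \<beta>(2) \<gamma>(2) have "{x\<in>X. (same_piece x \<beta> \<beta> \<and> same_piece x \<gamma> \<gamma>) \<and> \<not> same_piece x \<beta> \<gamma>} \<in> \<omega>"
    unfolding related_def by (intro uf_Collect_conj[OF uf])
  then show "real m \<le> d\<omega> \<beta> \<gamma>"
  proof (rule d\<omega>_lower_bound[OF \<beta>(1) \<gamma>(1)])
    fix x assume x: "x \<in> X" "(same_piece x \<beta> \<beta> \<and> same_piece x \<gamma> \<gamma>) \<and> \<not> same_piece x \<beta> \<gamma>"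
    then have "x \<in> rdom \<beta> \<inter> rdom \<gamma>" unfolding same_piece_def by blast
    then show "x \<in> rdom \<beta> \<inter> rdom \<gamma> \<and> real m \<le> d (rmap \<beta> x) (rmap \<gamma> x)"
      using same_piece_far[OF x(1)] x(2) by blast
  qed
next
  fix a \<beta> \<gamma> assume a: "a \<in> classes" "\<beta> \<in> a" "\<gamma> \<in> a"
  have "related \<beta> \<gamma>" using classes_related[OF a(1,1,2,3)] by simp
  then show "d\<omega> \<beta> \<gamma> \<le> real R"
    unfolding related_def
  proof (rule d\<omega>_upper_bound[OF classes_member(1)[OF a(1,2)] classes_member(1)[OF a(1,3)]])
    fix x assume x: "x \<in> X" "same_piece x \<beta> \<gamma>"
    then have "x \<in> rdom \<beta> \<inter> rdom \<gamma>" unfolding same_piece_def by blast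
    then show "x \<in> rdom \<beta> \<inter> rdom \<gamma> \<and> d (rmap \<beta> x) (rmap \<gamma> x) \<le> real R"
      using same_piece_close[OF x] by blast
  qed
qed

lemma kept_at_generic_point:
  assumes "finite G" "G \<subseteq> X\<omega>"
  obtains x where "x \<in> X" "\<And>\<alpha>. \<alpha> \<in> G \<Longrightarrow> x \<in> rdom \<alpha>"
    "\<And>\<alpha>. \<alpha> \<in> G \<Longrightarrow> \<alpha> \<in> kept \<longleftrightarrow> rmap \<alpha> x \<in> \<Union>(PP x)"
proof -
  define W where "W \<alpha> = {x\<in>X. same_piece x \<alpha> \<alpha>}" for \<alpha>
  define V where "V \<alpha> = rdom \<alpha> \<inter> (if \<alpha> \<in> kept then W \<alpha> else X - W \<alpha>)" for \<alpha>
  have "V \<alpha> \<in> \<omega>" if "\<alpha> \<in> G" for \<alpha>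
  proof -
    have "\<alpha> \<in> X\<omega>" using that assms(2) by blast
    moreover have "(if \<alpha> \<in> kept then W \<alpha> else X - W \<alpha>) \<in> \<omega>"
      using uf_compl[OF uf, of "W \<alpha>"] \<open>\<alpha> \<in> X\<omega>\<close> unfolding W_def kept_def related_def by auto
    ultimately show ?thesis unfolding V_def using uf_Int[OF uf representative(2)] by blast
  qed
  then obtain x where x: "x \<in> X" "\<And>\<alpha>. \<alpha> \<in> G \<Longrightarrow> x \<in> V \<alpha>"
    using uf_common_point[OF uf assms(1)] by blast
  show ?thesis
  proof (rule that[OF x(1)])
    fix \<alpha> assume "\<alpha> \<in> G"
    then have "x \<in> rdom \<alpha>" "x \<in> W \<alpha> \<longleftrightarrow> \<alpha> \<in> kept" using x(2)[of \<alpha>] unfolding V_def by (auto split: if_splits)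
    then show "x \<in> rdom \<alpha>" "\<alpha> \<in> kept \<longleftrightarrow> rmap \<alpha> x \<in> \<Union>(PP x)"
      using x(1) unfolding W_def same_piece_def by auto
  qed
qed

text \<open>If every localisation of \<mu> keeps a proportion c of the mass, so does kept: for finite
  G \<subseteq> X(\<omega>) and a generic point x for G,
  c \<mu>(G) \<le> c \<mu>(defined_at x) \<le> \<mu>(kept) + \<mu>(X(\<omega>) - G); then exhaust X(\<omega>) by finite sets.\<close>
lemma kept_large:
  assumes \<mu>: "space \<mu> = X\<omega>" "sets \<mu> = Pow X\<omega>" "emeasure \<mu> X\<omega> < \<infinity>" and "0 \<le> c"
    and local: "\<And>x. x \<in> X \<Longrightarrow>
      ennreal c * emeasure \<mu> (defined_at x) \<le> emeasure \<mu> {\<alpha>\<in>defined_at x. rmap \<alpha> x \<in> \<Union>(PP x)}"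
  shows "ennreal c * emeasure \<mu> X\<omega> \<le> emeasure \<mu> kept"
proof -
  interpret finite_measure \<mu> using \<mu> by (intro finite_measureI) auto
  have sets_\<mu>: "A \<in> sets \<mu>" if "A \<subseteq> X\<omega>" for A using that \<mu>(2) by simp
  have kept_sub: "kept \<subseteq> X\<omega>" unfolding kept_def by (rule Collect_subset)
  have "c * measure \<mu> G \<le> measure \<mu> kept + measure \<mu> (X\<omega> - G)" if G: "finite G" "G \<subseteq> X\<omega>" for G
  proof -
    obtain x where x: "x \<in> X" "\<And>\<alpha>. \<alpha> \<in> G \<Longrightarrow> x \<in> rdom \<alpha>"
      "\<And>\<alpha>. \<alpha> \<in> G \<Longrightarrow> \<alpha> \<in> kept \<longleftrightarrow> rmap \<alpha> x \<in> \<Union>(PP x)"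
      by (rule kept_at_generic_point[OF G]) blast
    let ?kept_x = "{\<alpha>\<in>defined_at x. rmap \<alpha> x \<in> \<Union>(PP x)}"
    have at_sub: "defined_at x \<subseteq> X\<omega>" unfolding defined_at_def by blast
    have "G \<subseteq> defined_at x" using G x(2) unfolding defined_at_def by blast
    then have "c * measure \<mu> G \<le> c * measure \<mu> (defined_at x)"
      using \<open>0 \<le> c\<close> at_sub by (intro mult_left_mono finite_measure_mono sets_\<mu>) auto
    also have "\<dots> \<le> measure \<mu> ?kept_x"
      using local[OF x(1)] \<open>0 \<le> c\<close> at_sub
      by (simp add: emeasure_eq_measure ennreal_mult[symmetric] ennreal_le_iff)
    also have "\<dots> \<le> measure \<mu> ((kept \<inter> G) \<union> (X\<omega> - G))"
      using x(3) at_sub G(2) by (intro finite_measure_mono sets_\<mu>) (auto simp: defined_at_def)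
    also have "\<dots> \<le> measure \<mu> kept + measure \<mu> (X\<omega> - G)"
      using kept_sub
      by (intro order_trans[OF measure_Un_le] add_right_mono finite_measure_mono sets_\<mu>) auto
    finally show ?thesis .
  qed
  then have "c * measure \<mu> X\<omega> \<le> measure \<mu> kept"
    using finite_measure_bound_by_exhaustion[OF finite_measure_axioms] countable_X\<omega> \<mu>(1,2)
    by (simp add: add.commute)
  then show ?thesis using \<open>0 \<le> c\<close> by (simp add: emeasure_eq_measure ennreal_mult[symmetric] ennreal_leI)
qed

end


theorem lemma7p10:
  fixes X :: "'a set" and d :: "'a \<Rightarrow> 'a \<Rightarrow> real" and c :: real and f :: "nat \<Rightarrow> nat"
    and \<omega> :: "'a set set"
  assumes "is_space X d"
    and "0 < c" and "c \<le> 1"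
    and "msp_with X d c f"
    and "\<omega> \<in> boundaryX X"
  shows "msp_with (X_omega X d \<omega>) (d_omega X d \<omega>) c f"
proof -
  interpret limit_space X d \<omega>
    using assms(1,5) by unfold_locales (auto simp: boundaryX_def betaX_def)
  show ?thesis unfolding msp_with_iff
  proof (intro conjI allI impI)
    show "mono f" using assms(4) by (simp add: msp_with_iff)
    fix m and \<mu> :: "'a set set measure"
    assume \<mu>: "space \<mu> = X\<omega>" "sets \<mu> = Pow X\<omega>" "emeasure \<mu> X\<omega> < \<infinity>"
    obtain PP where sparse: "\<And>x. x \<in> X \<Longrightarrow> sparse_family X d m (f m) (PP x)"
      and local: "\<And>x. x \<in> X \<Longrightarrow>
        ennreal c * emeasure \<mu> (defined_at x) \<le> emeasure \<mu> {\<alpha>\<in>defined_at x. rmap \<alpha> x \<in> \<Union>(PP x)}"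
      using sparse_families_at_points[OF assms(4) \<mu>] by blast
    interpret sparsification X d \<omega> m "f m" PP
      by (intro sparsification.intro sparsification_axioms.intro limit_space_axioms sparse)
    show "\<exists>P. sparse_family X\<omega> d\<omega> m (f m) P \<and> ennreal c * emeasure \<mu> X\<omega> \<le> emeasure \<mu> (\<Union>P)"
      using classes_sparse kept_large[OF \<mu> _ local] Union_classes assms(2) by auto
  qed
qed

end
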